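(* Let $n\ge1$ and let $\delta$ be a dependent variable of $\mathsf{Q}$. Let $\mathcal T$ consist of the two formulas $(\delta,1)\leftrightarrow(\phi_1,1)\land\dots\land(\phi_n,1)$ and $(\delta,0)\leftrightarrow(\phi_1,0)\land\dots\land(\phi_n,0)$. Then every evaluation satisfying $\mathcal T$ has $\delta^+=\{(1,\dots,1)\}$ and $\delta^-=\{(0,\dots,0)\}$; for such an evaluation, $\delta$ holds at each world $w=(c_1,\dots,c_n)\in W$ to the degree $\frac1n(c_1+\dots+c_n)$; consequently, for all $c_1,\dots,c_n\in[0,1]$, $\mathcal T$ entails $(\phi_1,c_1)\land\dots\land(\phi_n,c_n)\to\big(\delta,\tfrac{c_1+\dots+c_n}{n}\big)$.
   Context: The logic $\mathsf{Q}$: fix $n\ge1$, basic variables $\phi_1,\dots,\phi_n$ and countably many dependent variables $\alpha_1,\alpha_2,\dots$. A graded variable is a pair $(\alpha,c)$ with $\alpha$ a variable and $c\in[0,1]$. Formulas are built from graded variables by classical $\land,\lor,\lnot$; $\Phi\to\Psi$ abbreviates $\lnot\Phi\lor\Psi$ and $\leftrightarrow$ is the usual biconditional. The set of worlds is $W=[0,1]^n$ with metric $d((c_1,\dots,c_n),(d_1,\dots,d_n))=\sum_i|c_i-d_i|$, and $d(w,A)=\inf_{a\in A}d(w,a)$ for $A\subseteq W$. An evaluation assigns to each variable $\alpha$ a pair $(\alpha^+,\alpha^-)$ of disjoint nonempty closed subsets of $W$, with $\phi_i^+=\{(a_1,\dots,a_n):a_i=1\}$ and $\phi_i^-=\{(a_1,\dots,a_n):a_i=0\}$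 for each basic variable. At $w\in W$, $\alpha$ holds to the degree $\frac{d(w,\alpha^-)}{d(w,\alpha^+)+d(w,\alpha^-)}$. Each formula $\Phi$ is assigned $[\Phi]\subseteq W$: $[(\alpha,c)]$ is the set of worlds at which $\alpha$ holds to degree $c$, and $\land,\lor,\lnot$ are interpreted by $\cap,\cup$, complement in $W$. An evaluation satisfies $\Phi$ iff $[\Phi]=W$. A theory is a set of formulas; it is correct if some evaluation satisfies all its elements, and a correct theory $\mathcal T$ entails $\Phi$ if every evaluation satisfying all elements of $\mathcal T$ satisfies $\Phi$. *)

theory Defs
  imports Complex_Main
begin

text \<open>The logic Q with n basic variables. Worlds of W = [0,1]^n are represented as
functions nat \<Rightarrow> real vanishing outside {..<n}; coordinate i (0-based) is c_(i+1).\<close>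

datatype qvar = Basic nat | Dep nat
  (* Basic i = phi_(i+1), meaningful for i < n;  Dep k = alpha_(k+1) *)

datatype qform = GV qvar real | Neg qform | Conj qform qform | Disj qform qform

definition qimp :: "qform \<Rightarrow> qform \<Rightarrow> qform" where
  "qimp A B = Disj (Neg A) B"

definition qiff :: "qform \<Rightarrow> qform \<Rightarrow> qform" where
  "qiff A B = Conj (qimp A B) (qimp B A)"

fun bigconj :: "qform list \<Rightarrow> qform" where
  "bigconj [] = Disj (GV (Dep 0) 0) (Neg (GV (Dep 0) 0))"
| "bigconj [x] = x"
| "bigconj (x # y # xs) = Conj x (bigconj (y # xs))"

definition worlds :: "nat \<Rightarrow> (nat \<Rightarrow> real) set" where
  "worlds n = {w. (\<forall>i<n. 0 \<le> w i \<and> w i \<le> 1) \<and> (\<forall>i\<ge>n. w i = 0)}"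

definition qdist :: "nat \<Rightarrow> (nat \<Rightarrow> real) \<Rightarrow> (nat \<Rightarrow> real) \<Rightarrow> real" where
  "qdist n w v = (\<Sum>i<n. \<bar>w i - v i\<bar>)"

definition qsetdist :: "nat \<Rightarrow> (nat \<Rightarrow> real) \<Rightarrow> (nat \<Rightarrow> real) set \<Rightarrow> real" where
  "qsetdist n w A = Inf (qdist n w ` A)"

definition qclosed :: "nat \<Rightarrow> (nat \<Rightarrow> real) set \<Rightarrow> bool" where
  "qclosed n A \<longleftrightarrow> A \<subseteq> worlds n \<and> (\<forall>w\<in>worlds n. qsetdist n w A = 0 \<longrightarrow> w \<in> A)"

definition good_pair :: "nat \<Rightarrow> (nat \<Rightarrow> real) set \<times> (nat \<Rightarrow> real) set \<Rightarrow> bool" where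
  "good_pair n p \<longleftrightarrow> fst p \<inter> snd p = {} \<and> fst p \<noteq> {} \<and> snd p \<noteq> {}
     \<and> qclosed n (fst p) \<and> qclosed n (snd p)"

definition is_eval :: "nat \<Rightarrow> (qvar \<Rightarrow> (nat \<Rightarrow> real) set \<times> (nat \<Rightarrow> real) set) \<Rightarrow> bool" where
  "is_eval n e \<longleftrightarrow> (\<forall>k. good_pair n (e (Dep k)))
     \<and> (\<forall>i<n. e (Basic i) = ({w \<in> worlds n. w i = 1}, {w \<in> worlds n. w i = 0}))"

definition degree :: "nat \<Rightarrow> (qvar \<Rightarrow> (nat \<Rightarrow> real) set \<times> (nat \<Rightarrow> real) set) \<Rightarrow> qvar \<Rightarrow> (nat \<Rightarrow> real) \<Rightarrow> real" where
  "degree n e a w = qsetdist n w (snd (e a)) / (qsetdist n w (fst (e a)) + qsetdist n w (snd (e a)))"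

fun qsem :: "nat \<Rightarrow> (qvar \<Rightarrow> (nat \<Rightarrow> real) set \<times> (nat \<Rightarrow> real) set) \<Rightarrow> qform \<Rightarrow> (nat \<Rightarrow> real) set" where
  "qsem n e (GV a c) = {w \<in> worlds n. degree n e a w = c}"
| "qsem n e (Neg A) = worlds n - qsem n e A"
| "qsem n e (Conj A B) = qsem n e A \<inter> qsem n e B"
| "qsem n e (Disj A B) = qsem n e A \<union> qsem n e B"

definition satisfies :: "nat \<Rightarrow> (qvar \<Rightarrow> (nat \<Rightarrow> real) set \<times> (nat \<Rightarrow> real) set) \<Rightarrow> qform \<Rightarrow> bool" where
  "satisfies n e A \<longleftrightarrow> qsem n e A = worlds n"

definition correct :: "nat \<Rightarrow> qform set \<Rightarrow> bool" where
  "correct n T \<longleftrightarrow> (\<exists>e. is_eval n e \<and> (\<forall>A\<in>T. satisfies n e A))"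

definition entails :: "nat \<Rightarrow> qform set \<Rightarrow> qform \<Rightarrow> bool" where
  "entails n T A \<longleftrightarrow> correct n T \<and>
     (\<forall>e. is_eval n e \<and> (\<forall>B\<in>T. satisfies n e B) \<longrightarrow> satisfies n e A)"

definition Tdelta :: "nat \<Rightarrow> qvar \<Rightarrow> qform set" where
  "Tdelta n d = {qiff (GV d 1) (bigconj (map (\<lambda>i. GV (Basic i) 1) [0..<n])),
                 qiff (GV d 0) (bigconj (map (\<lambda>i. GV (Basic i) 0) [0..<n]))}"

end

theory Submission
  imports Defs
begin

text \<open>Since \<open>\<delta>\<^sup>+\<close> and \<open>\<delta>\<^sup>-\<close> are closed and disjoint, \<open>\<delta>\<close> holds to degree 1 exactly on
\<open>\<delta>\<^sup>+\<close> and to degree 0 exactly on \<open>\<delta>\<^sup>-\<close>, while \<open>(\<phi>\<^sub>i,c)\<close> holds exactly where the \<open>i\<close>-th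
coordinate is \<open>c\<close>. So the two biconditionals of \<open>T\<close> say precisely that \<open>\<delta>\<^sup>+\<close> and \<open>\<delta>\<^sup>-\<close>
are the corners \<open>(1,\<dots>,1)\<close> and \<open>(0,\<dots>,0)\<close>. The \<open>\<ell>\<^sup>1\<close>-distances of \<open>w\<close> to these corners are
\<open>\<Sum>(1 - c\<^sub>i)\<close> and \<open>\<Sum>c\<^sub>i\<close>, which add up to \<open>n\<close>, so the degree of \<open>\<delta>\<close> is the mean of the \<open>c\<^sub>i\<close>.\<close>

lemma qdist_nonneg: "qdist n w v \<ge> 0"
  unfolding qdist_def by (simp add: sum_nonneg)

lemma qdist_self [simp]: "qdist n w w = 0"
  unfolding qdist_def by simp

lemma qdist_eq_0_iff:
  assumes "w \<in> worlds n" "v \<in> worlds n"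
  shows "qdist n w v = 0 \<longleftrightarrow> w = v"
proof
  assume "qdist n w v = 0"
  then have "\<forall>i<n. w i = v i"
    unfolding qdist_def by (subst (asm) sum_nonneg_eq_0_iff) auto
  with assms show "w = v"
    unfolding worlds_def by (auto intro!: ext) (metis not_le)
qed simp

lemma qdist_ge_coordinate:
  assumes "i < n"
  shows "\<bar>w i - v i\<bar> \<le> qdist n w v"
  unfolding qdist_def using assms
  by (intro member_le_sum[where f = "\<lambda>j. \<bar>w j - v j\<bar>"]) auto

lemma qdist_fun_upd:
  assumes "i < n"
  shows "qdist n w (w(i := x)) = \<bar>w i - x\<bar>"
proof -
  have "qdist n w (w(i := x)) = (\<Sum>j<n. if j = i then \<bar>w i - x\<bar> else 0)"
    unfolding qdist_def by (intro sum.cong) auto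
  with assms show ?thesis by simp
qed

lemma qsetdist_nonneg: "A \<noteq> {} \<Longrightarrow> qsetdist n w A \<ge> 0"
  unfolding qsetdist_def by (rule cInf_greatest) (auto simp: qdist_nonneg)

lemma qsetdist_eq_0_of_mem: "w \<in> A \<Longrightarrow> qsetdist n w A = 0"
  unfolding qsetdist_def
  by (rule cInf_eq_minimum) (auto simp: qdist_nonneg intro: rev_image_eqI[where x = w])

lemma qsetdist_singleton [simp]: "qsetdist n w {v} = qdist n w v"
  unfolding qsetdist_def by simp

lemma qclosed_qsetdist_eq_0_iff:
  assumes "qclosed n A" "w \<in> worlds n"
  shows "qsetdist n w A = 0 \<longleftrightarrow> w \<in> A"
  using assms qsetdist_eq_0_of_mem unfolding qclosed_def by blast

lemma qclosed_singleton: "v \<in> worlds n \<Longrightarrow> qclosed n {v}"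
  unfolding qclosed_def by (auto simp: qdist_eq_0_iff)

lemma qsetdist_coordinate_level_set:
  assumes "i < n" "w \<in> worlds n" "x \<in> {0, 1}"
  shows "qsetdist n w {v \<in> worlds n. v i = x} = \<bar>w i - x\<bar>"
  unfolding qsetdist_def
proof (rule cInf_eq_minimum)
  have "w(i := x) \<in> worlds n" using assms unfolding worlds_def by auto
  then show "\<bar>w i - x\<bar> \<in> qdist n w ` {v \<in> worlds n. v i = x}"
    using qdist_fun_upd[OF assms(1)] by (intro image_eqI[where x = "w(i := x)"]) auto
qed (use qdist_ge_coordinate[OF assms(1)] in auto)

lemma degree_Basic:
  assumes "is_eval n e" "i < n" "w \<in> worlds n"
  shows "degree n e (Basic i) w = w i"
proof -
  have "e (Basic i) = ({w \<in> worlds n. w i = 1}, {w \<in> worlds n. w i = 0})"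
    using assms(1,2) unfolding is_eval_def by auto
  moreover have "0 \<le> w i" "w i \<le> 1" using assms(2,3) unfolding worlds_def by auto
  ultimately show ?thesis
    unfolding degree_def
    using qsetdist_coordinate_level_set[OF assms(2,3)] by simp
qed

lemma degree_eq_1_iff_and_eq_0_iff:
  assumes "good_pair n (e a)" "w \<in> worlds n"
  shows "(degree n e a w = 1 \<longleftrightarrow> w \<in> fst (e a)) \<and> (degree n e a w = 0 \<longleftrightarrow> w \<in> snd (e a))"
proof -
  define dp where "dp = qsetdist n w (fst (e a))"
  define dm where "dm = qsetdist n w (snd (e a))"
  have pair: "qclosed n (fst (e a))" "qclosed n (snd (e a))" "fst (e a) \<inter> snd (e a) = {}"
    "fst (e a) \<noteq> {}" "snd (e a) \<noteq> {}"
    using assms(1) unfolding good_pair_def by auto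
  have nonneg: "dp \<ge> 0" "dm \<ge> 0" unfolding dp_def dm_def using pair qsetdist_nonneg by auto
  have zero: "dp = 0 \<longleftrightarrow> w \<in> fst (e a)" "dm = 0 \<longleftrightarrow> w \<in> snd (e a)"
    unfolding dp_def dm_def using qclosed_qsetdist_eq_0_iff pair assms(2) by auto
  have degree: "degree n e a w = dm / (dp + dm)" unfolding degree_def dp_def dm_def ..
  show ?thesis
  proof (cases "w \<in> fst (e a)")
    case True
    then have "w \<notin> snd (e a)" using pair by auto
    with True zero nonneg degree show ?thesis by auto
  next
    case False
    then have "dp > 0" using zero nonneg by auto
    then have "dm / (dp + dm) \<noteq> 1" "dm / (dp + dm) = 0 \<longleftrightarrow> dm = 0"
      using nonneg by (auto simp: field_simps)
    with False zero degree show ?thesis by auto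
  qed
qed

lemma qsem_subset_worlds: "qsem n e A \<subseteq> worlds n"
  by (induction A) auto

lemma qsem_GV_1_0:
  assumes "good_pair n (e a)"
  shows "qsem n e (GV a 1) = fst (e a)" "qsem n e (GV a 0) = snd (e a)"
proof -
  have "fst (e a) \<subseteq> worlds n" "snd (e a) \<subseteq> worlds n"
    using assms unfolding good_pair_def qclosed_def by auto
  then show "qsem n e (GV a 1) = fst (e a)" "qsem n e (GV a 0) = snd (e a)"
    using degree_eq_1_iff_and_eq_0_iff[of n e a, OF assms] by auto
qed

lemma qsem_bigconj:
  "xs \<noteq> [] \<Longrightarrow> qsem n e (bigconj xs) = worlds n \<inter> (\<Inter>A\<in>set xs. qsem n e A)"
  by (induction xs rule: bigconj.induct) (use qsem_subset_worlds in auto)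

lemma qsem_bigconj_Basic:
  assumes "is_eval n e" "n \<ge> 1"
  shows "qsem n e (bigconj (map (\<lambda>i. GV (Basic i) (c i)) [0..<n]))
           = {w \<in> worlds n. \<forall>i<n. w i = c i}"
  using assms by (subst qsem_bigconj) (auto simp: degree_Basic)

lemma worlds_all_coordinates_1: "{w \<in> worlds n. \<forall>i<n. w i = 1} = {\<lambda>i. if i < n then 1 else 0}"
  unfolding worlds_def by (auto simp: fun_eq_iff)

lemma worlds_all_coordinates_0: "{w \<in> worlds n. \<forall>i<n. w i = 0} = {\<lambda>i. 0}"
  unfolding worlds_def by (auto simp: fun_eq_iff) (metis not_less)

lemma satisfies_qiff: "satisfies n e (qiff A B) \<longleftrightarrow> qsem n e A = qsem n e B"
  unfolding satisfies_def qiff_def qimp_def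
  using qsem_subset_worlds[of n e A] qsem_subset_worlds[of n e B] by auto

lemma satisfies_qimp: "satisfies n e (qimp A B) \<longleftrightarrow> qsem n e A \<subseteq> qsem n e B"
  unfolding satisfies_def qimp_def
  using qsem_subset_worlds[of n e A] qsem_subset_worlds[of n e B] by auto

lemma satisfies_Tdelta_iff:
  assumes "n \<ge> 1" "is_eval n e"
  shows "(\<forall>A\<in>Tdelta n (Dep k). satisfies n e A)
           \<longleftrightarrow> e (Dep k) = ({\<lambda>i. if i < n then 1 else 0}, {\<lambda>i. 0})"
proof -
  have "good_pair n (e (Dep k))" using assms(2) unfolding is_eval_def by auto
  then show ?thesis
    unfolding Tdelta_def
    by (simp add: satisfies_qiff qsem_GV_1_0 qsem_bigconj_Basic[OF assms(2,1)]
        worlds_all_coordinates_1 worlds_all_coordinates_0 prod_eq_iff del: qsem.simps)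
qed

lemma degree_corners_eq_mean:
  assumes "e a = ({\<lambda>i. if i < n then 1 else 0}, {\<lambda>i. 0})" "w \<in> worlds n" "n \<ge> 1"
  shows "degree n e a w = (\<Sum>i<n. w i) / real n"
proof -
  have bounds: "\<forall>i<n. 0 \<le> w i \<and> w i \<le> 1" using assms(2) unfolding worlds_def by auto
  have "qdist n w (\<lambda>i. if i < n then 1 else 0) = (\<Sum>i<n. 1 - w i)"
    unfolding qdist_def using bounds by (intro sum.cong) auto
  moreover have "qdist n w (\<lambda>i. 0) = (\<Sum>i<n. w i)"
    unfolding qdist_def using bounds by (intro sum.cong) auto
  moreover have "(\<Sum>i<n. 1 - w i) + (\<Sum>i<n. w i) = real n"
    by (simp add: sum_subtractf)
  ultimately show ?thesis unfolding degree_def assms(1) by simp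
qed

definition corner_eval :: "nat \<Rightarrow> qvar \<Rightarrow> (nat \<Rightarrow> real) set \<times> (nat \<Rightarrow> real) set" where
  "corner_eval n v = (case v of
       Basic i \<Rightarrow> ({w \<in> worlds n. w i = 1}, {w \<in> worlds n. w i = 0})
     | Dep j \<Rightarrow> ({\<lambda>i. if i < n then 1 else 0}, {\<lambda>i. 0}))"

lemma is_eval_corner_eval:
  assumes "n \<ge> 1"
  shows "is_eval n (corner_eval n)"
proof -
  have corners: "(\<lambda>i. if i < n then 1 else 0) \<in> worlds n" "(\<lambda>i. 0 :: real) \<in> worlds n"
    unfolding worlds_def by auto
  have "(\<lambda>i. if i < n then 1 else 0) \<noteq> (\<lambda>i. 0 :: real)"
    using assms by (auto simp: fun_eq_iff intro!: exI[of _ 0])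
  with corners show ?thesis
    unfolding is_eval_def good_pair_def corner_eval_def by (auto intro: qclosed_singleton)
qed

lemma correct_Tdelta: "n \<ge> 1 \<Longrightarrow> correct n (Tdelta n (Dep k))"
  unfolding correct_def
  using is_eval_corner_eval satisfies_Tdelta_iff by (fastforce simp: corner_eval_def)

theorem mainTheorem11:
  fixes n k :: nat
  assumes "n \<ge> 1"
  shows "(\<forall>e. is_eval n e \<and> (\<forall>A\<in>Tdelta n (Dep k). satisfies n e A) \<longrightarrow>
            e (Dep k) = ({\<lambda>i. if i < n then 1 else 0}, {\<lambda>i. 0})
            \<and> (\<forall>w\<in>worlds n. degree n e (Dep k) w = (\<Sum>i<n. w i) / real n))
       \<and> (\<forall>c :: nat \<Rightarrow> real. (\<forall>i<n. 0 \<le> c i \<and> c i \<le> 1) \<longrightarrow>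
            entails n (Tdelta n (Dep k))
              (qimp (bigconj (map (\<lambda>i. GV (Basic i) (c i)) [0..<n]))
                    (GV (Dep k) ((\<Sum>i<n. c i) / real n))))"
proof -
  have corners: "e (Dep k) = ({\<lambda>i. if i < n then 1 else 0}, {\<lambda>i. 0})"
    if "is_eval n e" "\<forall>A\<in>Tdelta n (Dep k). satisfies n e A" for e
    using satisfies_Tdelta_iff[OF assms] that by blast
  have mean: "degree n e (Dep k) w = (\<Sum>i<n. w i) / real n"
    if "is_eval n e" "\<forall>A\<in>Tdelta n (Dep k). satisfies n e A" "w \<in> worlds n" for e w
    using degree_corners_eq_mean[of e "Dep k", OF corners[OF that(1,2)] that(3) assms] .
  have "satisfies n e (qimp (bigconj (map (\<lambda>i. GV (Basic i) (c i)) [0..<n]))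
                            (GV (Dep k) ((\<Sum>i<n. c i) / real n)))"
    if "is_eval n e" "\<forall>A\<in>Tdelta n (Dep k). satisfies n e A" for e c
  proof -
    have "(\<Sum>i<n. w i) = (\<Sum>i<n. c i)" if "\<forall>i<n. w i = c i" for w :: "nat \<Rightarrow> real"
      using that by (intro sum.cong) auto
    then show ?thesis
      unfolding satisfies_qimp qsem_bigconj_Basic[OF that(1) assms]
      using mean[OF that] by auto
  qed
  then show ?thesis
    using corners mean correct_Tdelta[OF assms] unfolding entails_def by blast
qed

end
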